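(* Let $|\psi\rangle$ be a pure three-qubit state and $\{i,j,k\}=\{A,B,C\}$. If the reduced state $\rho_{ij}$ is $F_3$ steerable, i.e. $S_{ij}>1$, then $\frac{\mathcal C_{ik}^2+\mathcal C_{jk}^2}{2}<\frac49$.
   Context: For a two-qubit state $\rho$ let $t_{kl}=\mathrm{Tr}[\rho\,\sigma_k\otimes\sigma_l]$ ($\sigma_k$ Pauli matrices) and $S(\rho)=\sum_{k,l=1}^3 t_{kl}^2$; $\rho_{ij}$ is the reduced state of qubits $i,j$ and $S_{ij}=S(\rho_{ij})$. A two-qubit state is called $F_3$ steerable if it violates the three-settings CJWR linear steering inequality, which (the maximum over settings being $\sqrt{S(\rho)}$) is equivalent to $S(\rho)>1$. $\mathcal C_{ij}$ is the Wootters concurrence of $\rho_{ij}$: $\mathcal C(\rho)=\max\{0,\lambda_1-\lambda_2-\lambda_3-\lambda_4\}$, with $\lambda_1\ge\dots\ge\lambda_4$ the square roots of the eigenvalues of $\rho(\sigma_2\otimes\sigma_2)\rho^*(\sigma_2\otimes\sigma_2)$. *)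

theory Defs
  imports "Jordan_Normal_Form.Char_Poly"
begin

text \<open>Qubits A, B, C are labelled 0, 1, 2. A three-qubit state is a vector of dimension 8
  in the computational basis, basis index = 4 a + 2 b + c for qubit values a (A), b (B), c (C).\<close>

definition pure_three_qubit :: "complex vec \<Rightarrow> bool" where
  "pure_three_qubit psi \<longleftrightarrow> dim_vec psi = 8 \<and> (\<Sum>n<8. (cmod (psi $ n))\<^sup>2) = 1"

definition qweight :: "nat \<Rightarrow> nat" where
  "qweight q = 2 ^ (2 - q)"

definition bidx :: "nat \<Rightarrow> nat \<Rightarrow> nat \<Rightarrow> nat \<Rightarrow> nat \<Rightarrow> nat" where
  "bidx p q x y r = x * qweight p + y * qweight q + r * qweight (3 - p - q)"

text \<open>Reduced two-qubit state of qubits p (first factor) and q (second factor) of the pure state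
  psi; the 4x4 matrix is indexed by 2 x_p + x_q.\<close>
definition reduced :: "complex vec \<Rightarrow> nat \<Rightarrow> nat \<Rightarrow> complex mat" where
  "reduced psi p q = mat 4 4 (\<lambda>(m, n).
     \<Sum>r<2. psi $ bidx p q (m div 2) (m mod 2) r * cnj (psi $ bidx p q (n div 2) (n mod 2) r))"

definition pauli :: "nat \<Rightarrow> complex mat" where
  "pauli k = (if k = 1 then mat_of_rows_list 2 [[0, 1], [1, 0]]
              else if k = 2 then mat_of_rows_list 2 [[0, - \<i>], [\<i>, 0]]
              else if k = 3 then mat_of_rows_list 2 [[1, 0], [0, -1]]
              else 1\<^sub>m 2)"

definition kron2 :: "complex mat \<Rightarrow> complex mat \<Rightarrow> complex mat" where
  "kron2 X Y = mat 4 4 (\<lambda>(m, n). X $$ (m div 2, n div 2) * Y $$ (m mod 2, n mod 2))"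

definition tcorr :: "complex mat \<Rightarrow> nat \<Rightarrow> nat \<Rightarrow> real" where
  "tcorr rho k l = Re (\<Sum>m<4. (rho * kron2 (pauli k) (pauli l)) $$ (m, m))"

definition Sval :: "complex mat \<Rightarrow> real" where
  "Sval rho = (\<Sum>k\<in>{1..3}. \<Sum>l\<in>{1..3}. (tcorr rho k l)\<^sup>2)"

definition F3_steerable :: "complex mat \<Rightarrow> bool" where
  "F3_steerable rho \<longleftrightarrow> Sval rho > 1"

definition mconj :: "complex mat \<Rightarrow> complex mat" where
  "mconj X = mat (dim_row X) (dim_col X) (\<lambda>(m, n). cnj (X $$ (m, n)))"

definition wootters_R :: "complex mat \<Rightarrow> complex mat" where
  "wootters_R rho = (let Y = kron2 (pauli 2) (pauli 2) in rho * Y * mconj rho * Y)"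

definition eigvals_list :: "complex mat \<Rightarrow> complex list" where
  "eigvals_list M = (SOME es. length es = dim_row M \<and> char_poly M = (\<Prod>a\<leftarrow>es. [:- a, 1:]))"

definition concurrence :: "complex mat \<Rightarrow> real" where
  "concurrence rho = (let ls = rev (sort (map (\<lambda>e. sqrt (Re e)) (eigvals_list (wootters_R rho))))
     in max 0 (ls ! 0 - ls ! 1 - ls ! 2 - ls ! 3))"

end

(*
  With respect to qubit k write the state as \<psi> = \<Sum>\<^sub>r v\<^sub>r \<otimes> |r\<rangle>, so that the reduction
  \<rho>\<^sub>i\<^sub>j = \<Sum>\<^sub>r v\<^sub>r v\<^sub>r\<^sup>\<dagger> has rank at most two (and similarly for the other pairs).
  For such a state the Wootters matrix \<rho> Y \<rho>\<^sup>* Y, with Y = \<sigma>\<^sub>y \<otimes> \<sigma>\<^sub>y, shares its nonzero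
  spectrum with G\<^sup>* G, where G\<^sub>r\<^sub>s = v\<^sub>r\<^sup>T Y v\<^sub>s is a 2x2 matrix; hence
  C(\<rho>)\<^sup>2 = |G|\<^sub>F\<^sup>2 - 2 |det G|. A Fierz identity for the Pauli matrices gives
  S(\<rho>) = (tr \<rho>)\<^sup>2 + 2 |G|\<^sub>F\<^sup>2 - 4 det \<Gamma>, with \<Gamma> the Gram matrix of v\<^sub>0, v\<^sub>1.

  For the three reductions of \<psi>, det G is the same and |G\<^sub>i\<^sub>k|\<^sub>F\<^sup>2 + |G\<^sub>j\<^sub>k|\<^sub>F\<^sup>2 = 4 det \<Gamma>\<^sub>i\<^sub>j =: x,
  so C\<^sub>i\<^sub>k\<^sup>2 + C\<^sub>j\<^sub>k\<^sup>2 = x - 4 |det G| while S\<^sub>i\<^sub>j = 1 + 2 |G\<^sub>i\<^sub>j|\<^sub>F\<^sup>2 - x.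
  If C\<^sub>i\<^sub>k\<^sup>2 + C\<^sub>j\<^sub>k\<^sup>2 \<ge> 8/9, then det \<Gamma>\<^sub>i\<^sub>j \<ge> 2/9, so \<rho>\<^sub>i\<^sub>j has largest eigenvalue at most 2/3.
  This bounds the operator norm of G\<^sub>i\<^sub>j by 2/3, hence C\<^sub>i\<^sub>j\<^sup>2 = (s\<^sub>1 - s\<^sub>2)\<^sup>2 \<le> s\<^sub>1\<^sup>2 \<le> 4/9 for its
  singular values, i.e. 2 |G\<^sub>i\<^sub>j|\<^sub>F\<^sup>2 \<le> 8/9 + 4 |det G| \<le> x, contradicting S\<^sub>i\<^sub>j > 1.
*)
theory Submission
  imports Defs
begin

lemma sum_lessThan_2: "(\<Sum>m<(2::nat). f m) = f 0 + (f 1 :: 'a::comm_monoid_add)"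
  by (simp add: eval_nat_numeral)

lemma sum_lessThan_4: "(\<Sum>m<(4::nat). f m) = f 0 + f 1 + f 2 + (f 3 :: 'a::comm_monoid_add)"
  by (simp add: eval_nat_numeral add.assoc)

lemma sum_lessThan_8:
  "(\<Sum>n<(8::nat). f n) = f 0 + f 1 + f 2 + f 3 + f 4 + f 5 + f 6 + (f 7 :: 'a::comm_monoid_add)"
  by (simp add: eval_nat_numeral add.assoc)

lemma cmod_power2_eq_cnj_mult: "complex_of_real ((cmod z)\<^sup>2) = cnj z * z"
  using complex_norm_square[of z] by (simp add: mult.commute)

section \<open>Characteristic polynomials\<close>

interpretation const_poly: comm_ring_hom "\<lambda>a::'a::comm_ring_1. [:a:]"
  by unfold_locales (auto simp: one_pCons)

lemma char_poly_matrix_eq: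
  assumes "M \<in> carrier_mat n n"
  shows "char_poly_matrix M = [:0,1:] \<cdot>\<^sub>m 1\<^sub>m n - map_mat (\<lambda>a. [:a:]) M"
  unfolding char_poly_matrix_def using assms by (intro eq_matI) auto

text \<open>Sylvester's identity, by block elimination of the matrix with blocks 1, A, B, X.\<close>
lemma char_poly_mult_commute:
  fixes A :: "'a::idom mat"
  assumes A: "A \<in> carrier_mat n m" and B: "B \<in> carrier_mat m n"
  shows "char_poly (A * B) * [:0,1:] ^ m = [:0,1:] ^ n * char_poly (B * A)"
proof -
  define X :: "'a poly" where "X = [:0,1:]"
  define A' where "A' = map_mat (\<lambda>a. [:a:]) A"
  define B' where "B' = map_mat (\<lambda>a. [:a:]) B"
  have A': "A' \<in> carrier_mat n m" and B': "B' \<in> carrier_mat m n"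
    using A B by (auto simp: A'_def B'_def)
  have char_AB: "char_poly (A * B) = det (X \<cdot>\<^sub>m 1\<^sub>m n - A' * B')"
    unfolding char_poly_def X_def A'_def B'_def
    using A B by (subst char_poly_matrix_eq[of _ n]) (auto simp: const_poly.mat_hom_mult)
  have char_BA: "char_poly (B * A) = det (X \<cdot>\<^sub>m 1\<^sub>m m - B' * A')"
    unfolding char_poly_def X_def A'_def B'_def
    using A B by (subst char_poly_matrix_eq[of _ m]) (auto simp: const_poly.mat_hom_mult)
  define M where "M = four_block_mat (1\<^sub>m n) A' B' (X \<cdot>\<^sub>m 1\<^sub>m m)"
  define L1 where "L1 = four_block_mat (1\<^sub>m n) (0\<^sub>m n m) (- B') (1\<^sub>m m)"
  define L2 where "L2 = four_block_mat (X \<cdot>\<^sub>m 1\<^sub>m n) (- A') (0\<^sub>m m n) (1\<^sub>m m)"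
  have M: "M \<in> carrier_mat (n+m) (n+m)" unfolding M_def using A' B' by auto
  have L1: "L1 \<in> carrier_mat (n+m) (n+m)" unfolding L1_def using A' B' by auto
  have L2: "L2 \<in> carrier_mat (n+m) (n+m)" unfolding L2_def using A' B' by auto
  have "L1 * M = four_block_mat (1\<^sub>m n) A' (0\<^sub>m m n) (X \<cdot>\<^sub>m 1\<^sub>m m - B' * A')"
    unfolding L1_def M_def
    apply (subst mult_four_block_mat[OF one_carrier_mat zero_carrier_mat uminus_carrier_mat[OF B']
          one_carrier_mat one_carrier_mat A' B' smult_carrier_mat[OF one_carrier_mat]])
    using A' B' by (auto intro!: cong_four_block_mat simp: uminus_mult_left_mat)
  moreover have "det (four_block_mat (1\<^sub>m n) A' (0\<^sub>m m n) (X \<cdot>\<^sub>m 1\<^sub>m m - B' * A')) = char_poly (B * A)"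
    using A' B' char_BA by (subst det_four_block_mat_lower_left_zero[OF one_carrier_mat A' refl]) auto
  moreover have "det L1 = 1"
    unfolding L1_def using B'
    by (subst det_four_block_mat_upper_right_zero[OF one_carrier_mat refl uminus_carrier_mat[OF B']]) auto
  ultimately have det_M: "det M = char_poly (B * A)"
    using det_mult[OF L1 M] by simp
  have "L2 * M = four_block_mat (X \<cdot>\<^sub>m 1\<^sub>m n - A' * B') (0\<^sub>m n m) B' (X \<cdot>\<^sub>m 1\<^sub>m m)"
    unfolding L2_def M_def
    apply (subst mult_four_block_mat[OF smult_carrier_mat[OF one_carrier_mat] uminus_carrier_mat[OF A']
          zero_carrier_mat one_carrier_mat one_carrier_mat A' B' smult_carrier_mat[OF one_carrier_mat]])
    using A' B' by (auto intro!: cong_four_block_mat simp: uminus_mult_left_mat)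
  moreover have "det (four_block_mat (X \<cdot>\<^sub>m 1\<^sub>m n - A' * B') (0\<^sub>m n m) B' (X \<cdot>\<^sub>m 1\<^sub>m m))
      = char_poly (A * B) * X ^ m"
    using A' B' char_AB by (subst det_four_block_mat_upper_right_zero[OF _ refl B']) auto
  moreover have "det L2 = X ^ n"
    unfolding L2_def using A'
    by (subst det_four_block_mat_lower_left_zero[OF _ uminus_carrier_mat[OF A'] refl]) auto
  ultimately show ?thesis
    using det_mult[OF L2 M] det_M unfolding X_def by simp
qed

lemma det_carrier_mat_2:
  fixes A :: "'a::comm_ring_1 mat"
  assumes A: "A \<in> carrier_mat 2 2"
  shows "det A = A $$ (0,0) * A $$ (1,1) - A $$ (0,1) * A $$ (1,0)"
proof -
  have "det A = (\<Sum>j<2. A $$ (0,j) * cofactor A 0 j)"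
    by (rule laplace_expansion_row[OF A]) simp
  also have "\<dots> = A $$ (0,0) * A $$ (1,1) - A $$ (0,1) * A $$ (1,0)"
    using A unfolding cofactor_def
    by (simp add: numeral_2_eq_2 det_single mat_delete_carrier mat_delete_def)
  finally show ?thesis .
qed

lemma char_poly_mat_2:
  fixes f :: "nat \<times> nat \<Rightarrow> 'a::comm_ring_1"
  shows "char_poly (mat 2 2 f) = [: f (0,0) * f (1,1) - f (0,1) * f (1,0), - (f (0,0) + f (1,1)), 1:]"
proof -
  have entries: "char_poly_matrix (mat 2 2 f) $$ (0,0) = [:- f (0,0), 1:]"
     "char_poly_matrix (mat 2 2 f) $$ (1,1) = [:- f (1,1), 1:]"
     "char_poly_matrix (mat 2 2 f) $$ (0,1) = [:- f (0,1):]"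
     "char_poly_matrix (mat 2 2 f) $$ (1,0) = [:- f (1,0):]"
    unfolding char_poly_matrix_def by (simp_all add: numeral_2_eq_2)
  show ?thesis
    unfolding char_poly_def det_carrier_mat_2[OF char_poly_matrix_closed[OF mat_carrier]] entries
    by simp
qed

lemma proots_prod_linear_factors: "proots (\<Prod>a\<leftarrow>as. [:- a, 1::'a::idom:]) = mset as"
proof (induction as)
  case (Cons a as)
  have nz: "(\<Prod>a\<leftarrow>as. [:- a, 1::'a:]) \<noteq> 0"
    by (auto simp: prod_list_zero_iff)
  have "proots (\<Prod>a\<leftarrow>a # as. [:- a, 1::'a:]) = proots [:- a, 1:] + proots (\<Prod>a\<leftarrow>as. [:- a, 1:])"
    by (simp only: list.map prod_list.Cons) (rule proots_mult[OF _ nz], simp)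
  with Cons.IH show ?case using proots_linear_factor[of "- a"] by simp
qed simp

section \<open>Rank-two two-qubit states and their concurrence\<close>

text \<open>The spin-flip bilinear form \<open>w\<^sup>T (\<sigma>\<^sub>y \<otimes> \<sigma>\<^sub>y) u\<close> on \<open>\<complex>\<^sup>4\<close>.\<close>
definition flip_form :: "(nat \<Rightarrow> complex) \<Rightarrow> (nat \<Rightarrow> complex) \<Rightarrow> complex" where
  "flip_form w u = - (w 0 * u 3) + w 1 * u 2 + w 2 * u 1 - w 3 * u 0"

definition flip_mat :: "complex mat" where
  "flip_mat = mat 4 4 (\<lambda>(m, n). if m + n = 3 then if m = 1 \<or> m = 2 then 1 else -1 else 0)"

lemma kron2_pauli_2_2: "kron2 (pauli 2) (pauli 2) = flip_mat"
proof (rule eq_matI)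
  fix m n assume "m < dim_row flip_mat" "n < dim_col flip_mat"
  then have "m \<in> {0,1,2,3}" "n \<in> {0,1,2,3}" by (auto simp: flip_mat_def)
  then show "kron2 (pauli 2) (pauli 2) $$ (m, n) = flip_mat $$ (m, n)"
    by (auto simp: kron2_def pauli_def flip_mat_def mat_of_rows_list_def)
qed (auto simp: kron2_def flip_mat_def)

definition rank2_rho :: "(nat \<Rightarrow> nat \<Rightarrow> complex) \<Rightarrow> complex mat" where
  "rank2_rho v = mat 4 4 (\<lambda>(m, n). \<Sum>r<2. v r m * cnj (v r n))"

definition vmat :: "(nat \<Rightarrow> nat \<Rightarrow> complex) \<Rightarrow> complex mat" where
  "vmat v = mat 4 2 (\<lambda>(m, r). v r m)"

definition flip_frob :: "(nat \<Rightarrow> nat \<Rightarrow> complex) \<Rightarrow> real" where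
  "flip_frob v = (\<Sum>r<2. \<Sum>s<2. (cmod (flip_form (v r) (v s)))\<^sup>2)"

definition flip_det :: "(nat \<Rightarrow> nat \<Rightarrow> complex) \<Rightarrow> complex" where
  "flip_det v = flip_form (v 0) (v 0) * flip_form (v 1) (v 1) - flip_form (v 0) (v 1) * flip_form (v 1) (v 0)"

lemma flip_form_commute: "flip_form w u = flip_form u w"
  unfolding flip_form_def by (simp add: algebra_simps)

lemma rank2_rho_eq_vmat: "rank2_rho v = vmat v * transpose_mat (mconj (vmat v))"
  by (rule eq_matI) (auto simp: rank2_rho_def vmat_def mconj_def scalar_prod_def sum_lessThan_2 lessThan_atLeast0)

lemma mconj_rank2_rho: "mconj (rank2_rho v) = mconj (vmat v) * transpose_mat (vmat v)"
  by (rule eq_matI) (auto simp: rank2_rho_def vmat_def mconj_def scalar_prod_def sum_lessThan_2 lessThan_atLeast0)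

lemma flip_gram_eq: "transpose_mat (vmat v) * flip_mat * vmat v = mat 2 2 (\<lambda>(r, s). flip_form (v r) (v s))"
  by (rule eq_matI)
    (auto simp: vmat_def flip_mat_def flip_form_def scalar_prod_def sum_lessThan_4 lessThan_atLeast0[symmetric])

lemma flip_gram_cnj_eq:
  "transpose_mat (mconj (vmat v)) * flip_mat * mconj (vmat v) = mat 2 2 (\<lambda>(r, s). cnj (flip_form (v r) (v s)))"
  by (rule eq_matI)
    (auto simp: vmat_def mconj_def flip_mat_def flip_form_def scalar_prod_def sum_lessThan_4 lessThan_atLeast0[symmetric])

lemma wootters_R_rank2_rho_factor:
  obtains W where "W \<in> carrier_mat 2 4" "wootters_R (rank2_rho v) = vmat v * W"
    "W * vmat v = mat 2 2 (\<lambda>(r, s). \<Sum>t<2. cnj (flip_form (v r) (v t)) * flip_form (v t) (v s))"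
proof
  define V where "V = vmat v"
  define Y where "Y = flip_mat"
  define Vc where "Vc = mconj V"
  have V: "V \<in> carrier_mat 4 2" and Vh: "transpose_mat Vc \<in> carrier_mat 2 4"
    and Vc: "Vc \<in> carrier_mat 4 2" and Vt: "transpose_mat V \<in> carrier_mat 2 4"
    and Y: "Y \<in> carrier_mat 4 4"
    by (auto simp: V_def Vc_def vmat_def mconj_def Y_def flip_mat_def)
  have VhY: "transpose_mat Vc * Y \<in> carrier_mat 2 4" and VtY: "transpose_mat V * Y \<in> carrier_mat 2 4"
    using Vh Vt Y by auto
  have VhYVc: "transpose_mat Vc * Y * Vc \<in> carrier_mat 2 2" using VhY Vc by auto
  define W where "W = transpose_mat Vc * Y * Vc * (transpose_mat V * Y)"
  show "W \<in> carrier_mat 2 4" unfolding W_def using VhYVc VtY by auto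
  have "wootters_R (rank2_rho v) = V * transpose_mat Vc * Y * (Vc * transpose_mat V) * Y"
    unfolding wootters_R_def Let_def kron2_pauli_2_2 mconj_rank2_rho
    unfolding rank2_rho_eq_vmat V_def Vc_def Y_def ..
  also have "\<dots> = V * (transpose_mat Vc * Y * (Vc * transpose_mat V) * Y)"
    using assoc_mult_mat[OF V Vh Y] assoc_mult_mat[OF V VhY mult_carrier_mat[OF Vc Vt]]
      assoc_mult_mat[OF V mult_carrier_mat[OF VhY mult_carrier_mat[OF Vc Vt]] Y]
    by (simp only:)
  also have "transpose_mat Vc * Y * (Vc * transpose_mat V) * Y = W"
    unfolding W_def using assoc_mult_mat[OF VhY Vc Vt, symmetric] assoc_mult_mat[OF VhYVc Vt Y]
    by (simp only:)
  finally show "wootters_R (rank2_rho v) = vmat v * W" unfolding V_def .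
  have "W * V = transpose_mat Vc * Y * Vc * (transpose_mat V * Y * V)"
    unfolding W_def using assoc_mult_mat[OF VhYVc VtY V] by (simp only:)
  also have "\<dots> = mat 2 2 (\<lambda>(r, s). cnj (flip_form (v r) (v s))) * mat 2 2 (\<lambda>(r, s). flip_form (v r) (v s))"
    unfolding V_def Vc_def Y_def flip_gram_eq flip_gram_cnj_eq ..
  also have "\<dots> = mat 2 2 (\<lambda>(r, s). \<Sum>t<2. cnj (flip_form (v r) (v t)) * flip_form (v t) (v s))"
    by (rule eq_matI) (auto simp: scalar_prod_def sum_lessThan_2 lessThan_atLeast0[symmetric])
  finally show "W * vmat v = \<dots>" unfolding V_def .
qed

lemma char_poly_flip_gram_sq:
  "char_poly (mat 2 2 (\<lambda>(r, s). \<Sum>t<2. cnj (flip_form (v r) (v t)) * flip_form (v t) (v s)))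
    = [: of_real ((cmod (flip_det v))\<^sup>2), - of_real (flip_frob v), 1:]"
proof -
  define g where "g r s = flip_form (v r) (v s)" for r s
  have "g 1 0 = g 0 1" unfolding g_def by (rule flip_form_commute)
  moreover have "of_real (flip_frob v) = (\<Sum>r<2. \<Sum>s<2. cnj (g r s) * g r s)"
    unfolding flip_frob_def of_real_sum cmod_power2_eq_cnj_mult g_def ..
  ultimately show ?thesis
    unfolding char_poly_mat_2 cmod_power2_eq_cnj_mult flip_det_def g_def[symmetric]
    by (simp add: sum_lessThan_2 algebra_simps)
qed

lemma char_poly_wootters_R_rank2_rho:
  "char_poly (wootters_R (rank2_rho v))
    = [:0,1:] ^ 2 * [: of_real ((cmod (flip_det v))\<^sup>2), - of_real (flip_frob v), 1:]"
proof -
  obtain W where W: "W \<in> carrier_mat 2 4" and R: "wootters_R (rank2_rho v) = vmat v * W"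
    and WV: "W * vmat v = mat 2 2 (\<lambda>(r, s). \<Sum>t<2. cnj (flip_form (v r) (v t)) * flip_form (v t) (v s))"
    by (rule wootters_R_rank2_rho_factor)
  have "vmat v \<in> carrier_mat 4 2" by (simp add: vmat_def)
  from char_poly_mult_commute[OF this W]
  have "char_poly (wootters_R (rank2_rho v)) * [:0,1:] ^ 2
      = [:0,1:] ^ 4 * [: of_real ((cmod (flip_det v))\<^sup>2), - of_real (flip_frob v), 1:]"
    unfolding R WV char_poly_flip_gram_sq .
  also have "\<dots> = ([:0,1:] ^ 2 * [: of_real ((cmod (flip_det v))\<^sup>2), - of_real (flip_frob v), 1:]) * [:0,1:] ^ 2"
  proof -
    have "x ^ 4 = x ^ 2 * x ^ 2" for x :: "complex poly" by (simp flip: power_add)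
    then show ?thesis by (simp only: mult_ac)
  qed
  finally show ?thesis
    by (rule mult_right_cancel [THEN iffD1, rotated]) simp
qed

lemma flip_frob_ge_flip_det: "2 * cmod (flip_det v) \<le> flip_frob v"
proof -
  define g where "g r s = cmod (flip_form (v r) (v s))" for r s
  have "cmod (flip_det v) \<le> g 0 0 * g 1 1 + g 0 1 * g 1 0"
    unfolding flip_det_def g_def by (metis norm_mult norm_triangle_ineq4)
  moreover have "2 * (g 0 0 * g 1 1) \<le> (g 0 0)\<^sup>2 + (g 1 1)\<^sup>2" "2 * (g 0 1 * g 1 0) \<le> (g 0 1)\<^sup>2 + (g 1 0)\<^sup>2"
    using sum_squares_bound[of "g 0 0" "g 1 1"] sum_squares_bound[of "g 0 1" "g 1 0"] by simp_all
  ultimately show ?thesis unfolding flip_frob_def g_def[symmetric] sum_lessThan_2 by linarith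
qed

lemma concurrence_eqI:
  fixes rho :: "complex mat" and r1 r2 :: real
  assumes dim: "dim_row rho = 4"
    and char: "char_poly (wootters_R rho) = [:0,1:] ^ 2 * ([:- of_real r1, 1:] * [:- of_real r2, 1:])"
    and r2: "0 \<le> r2" "r2 \<le> r1"
  shows "concurrence rho = sqrt r1 - sqrt r2"
proof -
  define R where "R = wootters_R rho"
  define es where "es = eigvals_list R"
  have char_R: "char_poly R = (\<Prod>a\<leftarrow>[0, 0, of_real r1, of_real r2]. [:- a, 1:])"
    using char unfolding R_def by (simp add: power2_eq_square mult.assoc)
  have dim_R: "dim_row R = 4" unfolding R_def wootters_R_def Let_def using dim by simp
  have "length es = dim_row R \<and> char_poly R = (\<Prod>a\<leftarrow>es. [:- a, 1:])"
    unfolding es_def eigvals_list_def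
    by (rule someI[of _ "[0, 0, of_real r1, of_real r2]"]) (simp add: char_R dim_R)
  then have "mset es = proots (char_poly R)"
    by (simp only: proots_prod_linear_factors)
  also have "\<dots> = mset [0, 0, of_real r1, of_real r2]"
    unfolding char_R proots_prod_linear_factors ..
  finally have "mset (map (\<lambda>e. sqrt (Re e)) es) = mset [0, 0, sqrt r2, sqrt r1]"
    by (simp add: add_mset_commute)
  then have "sort (map (\<lambda>e. sqrt (Re e)) es) = [0, 0, sqrt r2, sqrt r1]"
    by (intro properties_for_sort) (use r2 in \<open>auto intro: real_sqrt_le_mono\<close>)
  then show ?thesis
    unfolding concurrence_def Let_def R_def[symmetric] es_def[symmetric]
    using r2 real_sqrt_le_mono[OF r2(2)] by simp
qed

lemma quadratic_nonneg_roots: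
  fixes F h :: real
  assumes h: "0 \<le> h" and hF: "2 * h \<le> F"
  obtains r1 r2 where "0 \<le> r2" "r2 \<le> r1" "r1 + r2 = F" "r1 * r2 = h\<^sup>2"
proof -
  define s where "s = sqrt (F\<^sup>2 - 4 * h\<^sup>2)"
  have "(2 * h)\<^sup>2 \<le> F\<^sup>2" by (rule power_mono[OF hF]) (use h in simp)
  then have s2: "s\<^sup>2 = F\<^sup>2 - 4 * h\<^sup>2" and s0: "0 \<le> s"
    unfolding s_def by (simp_all add: power_mult_distrib)
  have "s \<le> F" by (rule power2_le_imp_le) (use s2 h hF in auto)
  moreover have "(F + s) / 2 * ((F - s) / 2) = h\<^sup>2"
    using s2 by (simp add: field_simps power2_eq_square)
  ultimately show thesis
    using s0 by (intro that[of "(F - s) / 2" "(F + s) / 2"]) (auto simp: field_simps)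
qed

lemma concurrence_rank2_rho: "(concurrence (rank2_rho v))\<^sup>2 = flip_frob v - 2 * cmod (flip_det v)"
proof -
  obtain r1 r2 where r: "0 \<le> r2" "r2 \<le> r1" and sum: "r1 + r2 = flip_frob v"
    and prod: "r1 * r2 = (cmod (flip_det v))\<^sup>2"
    using quadratic_nonneg_roots[OF norm_ge_zero flip_frob_ge_flip_det] .
  have factor: "[: of_real ((cmod (flip_det v))\<^sup>2), - of_real (flip_frob v), 1:]
      = [:- of_real r1, 1:] * [:- of_real r2, 1::complex:]"
    unfolding sum [symmetric] prod [symmetric] by simp
  have dim: "dim_row (rank2_rho v) = 4" by (simp add: rank2_rho_def)
  have "char_poly (wootters_R (rank2_rho v)) = [:0,1:] ^ 2 * ([:- of_real r1, 1:] * [:- of_real r2, 1:])"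
    unfolding char_poly_wootters_R_rank2_rho factor ..
  from concurrence_eqI[OF dim this r] have "concurrence (rank2_rho v) = sqrt r1 - sqrt r2" .
  then have "(concurrence (rank2_rho v))\<^sup>2 = r1 + r2 - 2 * sqrt (r1 * r2)"
    using r by (simp add: power2_diff real_sqrt_mult)
  then show ?thesis unfolding sum prod by simp
qed

section \<open>The correlation sum \<open>S\<close> of a rank-two state\<close>

definition sq_norm4 :: "(nat \<Rightarrow> complex) \<Rightarrow> real" where
  "sq_norm4 w = (\<Sum>m<4. (cmod (w m))\<^sup>2)"

definition inner4 :: "(nat \<Rightarrow> complex) \<Rightarrow> (nat \<Rightarrow> complex) \<Rightarrow> complex" where
  "inner4 w u = (\<Sum>m<4. w m * cnj (u m))"

text \<open>\<open>\<langle>a| \<sigma>\<^sub>k \<otimes> \<sigma>\<^sub>l |a\<rangle>\<close>\<close>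
definition pauli_expect :: "(nat \<Rightarrow> complex) \<Rightarrow> nat \<Rightarrow> nat \<Rightarrow> complex" where
  "pauli_expect a k l =
     (\<Sum>m<4. \<Sum>n<4. a m * cnj (a n) * (pauli k $$ (n div 2, m div 2) * pauli l $$ (n mod 2, m mod 2)))"

lemma pauli_expect_table:
  "pauli_expect a 1 1 = a 0 * cnj (a 3) + a 1 * cnj (a 2) + a 2 * cnj (a 1) + a 3 * cnj (a 0)"
  "pauli_expect a 1 2 = \<i> * (a 0 * cnj (a 3) - a 1 * cnj (a 2) + a 2 * cnj (a 1) - a 3 * cnj (a 0))"
  "pauli_expect a 1 3 = a 0 * cnj (a 2) - a 1 * cnj (a 3) + a 2 * cnj (a 0) - a 3 * cnj (a 1)"
  "pauli_expect a 2 1 = \<i> * (a 0 * cnj (a 3) + a 1 * cnj (a 2) - a 2 * cnj (a 1) - a 3 * cnj (a 0))"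
  "pauli_expect a 2 2 = - a 0 * cnj (a 3) + a 1 * cnj (a 2) + a 2 * cnj (a 1) - a 3 * cnj (a 0)"
  "pauli_expect a 2 3 = \<i> * (a 0 * cnj (a 2) - a 1 * cnj (a 3) - a 2 * cnj (a 0) + a 3 * cnj (a 1))"
  "pauli_expect a 3 1 = a 0 * cnj (a 1) + a 1 * cnj (a 0) - a 2 * cnj (a 3) - a 3 * cnj (a 2)"
  "pauli_expect a 3 2 = \<i> * (a 0 * cnj (a 1) - a 1 * cnj (a 0) - a 2 * cnj (a 3) + a 3 * cnj (a 2))"
  "pauli_expect a 3 3 = a 0 * cnj (a 0) - a 1 * cnj (a 1) - a 2 * cnj (a 2) + a 3 * cnj (a 3)"
  by (simp_all add: pauli_expect_def pauli_def mat_of_rows_list_def sum_lessThan_4 algebra_simps)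

lemma sum_atLeast1_atMost3: "(\<Sum>k\<in>{1..3::nat}. f k) = f 1 + f 2 + (f 3 :: 'a::comm_monoid_add)"
proof -
  have "{1..3::nat} = {1, 2, 3}" by auto
  then show ?thesis by (simp add: add.assoc)
qed

lemma of_real_Re_pauli_expect:
  assumes "k \<in> {1..3}" "l \<in> {1..3}"
  shows "of_real (Re (pauli_expect a k l)) = pauli_expect a k l"
proof -
  from assms have "k \<in> {1, 2, 3}" "l \<in> {1, 2, 3}" by auto
  then have "cnj (pauli_expect a k l) = pauli_expect a k l"
    by (auto simp: pauli_expect_table pauli_expect_table[unfolded One_nat_def] algebra_simps)
  then show ?thesis by (simp add: complex_eq_iff)
qed

lemma pauli_correlation_sum:
  "(\<Sum>k\<in>{1..3}. \<Sum>l\<in>{1..3}. Re (pauli_expect a k l) * Re (pauli_expect b k l))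
    = 2 * (cmod (inner4 a b))\<^sup>2 - sq_norm4 a * sq_norm4 b + 2 * (cmod (flip_form a b))\<^sup>2"
proof -
  have "of_real (\<Sum>k\<in>{1..3}. \<Sum>l\<in>{1..3}. Re (pauli_expect a k l) * Re (pauli_expect b k l))
      = (\<Sum>k\<in>{1..3}. \<Sum>l\<in>{1..3}. pauli_expect a k l * pauli_expect b k l)"
    by (simp add: of_real_Re_pauli_expect)
  also have "\<dots> = of_real (2 * (cmod (inner4 a b))\<^sup>2 - sq_norm4 a * sq_norm4 b + 2 * (cmod (flip_form a b))\<^sup>2)"
    unfolding of_real_add of_real_diff of_real_mult sq_norm4_def of_real_sum cmod_power2_eq_cnj_mult
    unfolding sum_atLeast1_atMost3 pauli_expect_table inner4_def flip_form_def
    by (simp add: sum_lessThan_4 algebra_simps)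
  finally show ?thesis by (simp only: of_real_eq_iff)
qed

lemma trace_mult_kron2:
  "(\<Sum>m<4. (mat 4 4 f * kron2 X Y) $$ (m, m))
    = (\<Sum>m<4. \<Sum>n<4. f (m, n) * (X $$ (n div 2, m div 2) * Y $$ (n mod 2, m mod 2)))"
  by (simp add: kron2_def scalar_prod_def lessThan_atLeast0)

lemma tcorr_rank2_rho: "tcorr (rank2_rho v) k l = Re (pauli_expect (v 0) k l) + Re (pauli_expect (v 1) k l)"
  unfolding tcorr_def rank2_rho_def trace_mult_kron2 pauli_expect_def
  by (simp add: sum_lessThan_2 distrib_right sum.distrib)

lemma cmod_inner4_self: "cmod (inner4 a a) = sq_norm4 a"
proof -
  have "inner4 a a = of_real (sq_norm4 a)"
    unfolding inner4_def sq_norm4_def of_real_sum cmod_power2_eq_cnj_mult by (simp add: mult.commute)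
  moreover have "0 \<le> sq_norm4 a" unfolding sq_norm4_def by (simp add: sum_nonneg)
  ultimately show ?thesis by simp
qed

lemma Sval_rank2_rho:
  "Sval (rank2_rho v) = (sq_norm4 (v 0) + sq_norm4 (v 1))\<^sup>2 + 2 * flip_frob v
     - 4 * (sq_norm4 (v 0) * sq_norm4 (v 1) - (cmod (inner4 (v 0) (v 1)))\<^sup>2)"
proof -
  define P where "P a b = (\<Sum>k\<in>{1..3}. \<Sum>l\<in>{1..3}. Re (pauli_expect a k l) * Re (pauli_expect b k l))" for a b
  have "Sval (rank2_rho v) = P (v 0) (v 0) + P (v 1) (v 1) + 2 * P (v 0) (v 1)"
    unfolding Sval_def tcorr_rank2_rho P_def
    by (simp add: power2_eq_square algebra_simps sum.distrib sum_distrib_left)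
  moreover have "flip_form (v 1) (v 0) = flip_form (v 0) (v 1)" by (rule flip_form_commute)
  ultimately show ?thesis
    unfolding P_def pauli_correlation_sum cmod_inner4_self flip_frob_def sum_lessThan_2
    by (simp add: algebra_simps power2_eq_square)
qed

section \<open>Reductions of a pure three-qubit state\<close>

text \<open>For amplitudes \<open>T x y z\<close> of qubits \<open>i, j, k\<close>, \<open>cond_ij T r\<close> is the unnormalised state
  of qubits \<open>i, j\<close> given that qubit \<open>k\<close> is in \<open>|r\<rangle>\<close>, so that \<open>\<rho>\<^sub>i\<^sub>j = rank2_rho (cond_ij T)\<close>;
  likewise for the other two pairs.\<close>
definition cond_ij :: "(nat \<Rightarrow> nat \<Rightarrow> nat \<Rightarrow> complex) \<Rightarrow> nat \<Rightarrow> nat \<Rightarrow> complex" where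
  "cond_ij T r m = T (m div 2) (m mod 2) r"

definition cond_ik :: "(nat \<Rightarrow> nat \<Rightarrow> nat \<Rightarrow> complex) \<Rightarrow> nat \<Rightarrow> nat \<Rightarrow> complex" where
  "cond_ik T r m = T (m div 2) r (m mod 2)"

definition cond_jk :: "(nat \<Rightarrow> nat \<Rightarrow> nat \<Rightarrow> complex) \<Rightarrow> nat \<Rightarrow> nat \<Rightarrow> complex" where
  "cond_jk T r m = T r (m div 2) (m mod 2)"

lemma flip_frob_cond_ik_add_cond_jk:
  "flip_frob (cond_ik T) + flip_frob (cond_jk T)
    = 4 * (sq_norm4 (cond_ij T 0) * sq_norm4 (cond_ij T 1) - (cmod (inner4 (cond_ij T 0) (cond_ij T 1)))\<^sup>2)"
proof -
  have "(of_real (flip_frob (cond_ik T) + flip_frob (cond_jk T)) :: complex)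
      = of_real (4 * (sq_norm4 (cond_ij T 0) * sq_norm4 (cond_ij T 1) - (cmod (inner4 (cond_ij T 0) (cond_ij T 1)))\<^sup>2))"
    unfolding of_real_add of_real_diff of_real_mult flip_frob_def sq_norm4_def of_real_sum cmod_power2_eq_cnj_mult
    unfolding inner4_def flip_form_def cond_ij_def cond_ik_def cond_jk_def sum_lessThan_2 sum_lessThan_4
    by (simp add: algebra_simps)
  then show ?thesis by (simp only: of_real_eq_iff)
qed

lemma flip_det_cond_ik: "flip_det (cond_ik T) = flip_det (cond_ij T)"
  and flip_det_cond_jk: "flip_det (cond_jk T) = flip_det (cond_ij T)"
  unfolding flip_det_def flip_form_def cond_ij_def cond_ik_def cond_jk_def
  by (simp_all add: algebra_simps)

lemma perm_3_cases:
  assumes "{i, j, k} = {0, 1, 2::nat}"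
  shows "(i = 0 \<and> j = 1 \<and> k = 2) \<or> (i = 0 \<and> j = 2 \<and> k = 1) \<or> (i = 1 \<and> j = 0 \<and> k = 2) \<or>
         (i = 1 \<and> j = 2 \<and> k = 0) \<or> (i = 2 \<and> j = 0 \<and> k = 1) \<or> (i = 2 \<and> j = 1 \<and> k = 0)"
proof -
  have "i \<in> {0,1,2}" "j \<in> {0,1,2}" "k \<in> {0,1,2}" "0 \<in> {i,j,k}" "1 \<in> {i,j,k}" "2 \<in> {i,j,k}"
    using assms by blast+
  then show ?thesis by auto
qed

lemma reduced_eq_rank2_rho:
  fixes psi :: "complex vec"
  assumes "{i, j, k} = {0, 1, 2}"
  defines "T \<equiv> \<lambda>x y z. psi $ bidx i j x y z"
  shows "reduced psi i j = rank2_rho (cond_ij T)"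
    and "reduced psi i k = rank2_rho (cond_ik T)"
    and "reduced psi j k = rank2_rho (cond_jk T)"
proof -
  have "bidx i k x y r = bidx i j x r y" and "bidx j k x y r = bidx i j r x y" for x y r
    using perm_3_cases[OF assms(1)] by (auto simp: bidx_def qweight_def)
  then show "reduced psi i j = rank2_rho (cond_ij T)" "reduced psi i k = rank2_rho (cond_ik T)"
    "reduced psi j k = rank2_rho (cond_jk T)"
    unfolding reduced_def rank2_rho_def cond_ij_def cond_ik_def cond_jk_def T_def by simp_all
qed

lemma sq_norm4_cond_ij_total:
  fixes psi :: "complex vec"
  assumes "{i, j, k} = {0, 1, 2}" and "pure_three_qubit psi"
  defines "T \<equiv> \<lambda>x y z. psi $ bidx i j x y z"
  shows "sq_norm4 (cond_ij T 0) + sq_norm4 (cond_ij T 1) = 1"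
proof -
  have "(\<Sum>n<8. (cmod (psi $ n))\<^sup>2) = 1" using assms(2) unfolding pure_three_qubit_def by simp
  then show ?thesis
    using perm_3_cases[OF assms(1)] unfolding sq_norm4_def cond_ij_def T_def sum_lessThan_4 sum_lessThan_8
    by (elim disjE; simp add: bidx_def qweight_def; simp add: numeral_2_eq_2 numeral_3_eq_3; linarith)
qed

section \<open>A bound on the concurrence of a strongly mixed reduction\<close>

lemma cmod_flip_form_self_le: "cmod (flip_form w w) \<le> sq_norm4 w"
proof -
  have "flip_form w w = 2 * (w 1 * w 2) - 2 * (w 0 * w 3)"
    unfolding flip_form_def by (simp add: algebra_simps)
  then have "cmod (flip_form w w) \<le> 2 * (cmod (w 1) * cmod (w 2)) + 2 * (cmod (w 0) * cmod (w 3))"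
    by (metis norm_mult norm_numeral norm_triangle_ineq4 mult.assoc)
  also have "\<dots> \<le> sq_norm4 w"
    unfolding sq_norm4_def sum_lessThan_4
    using sum_squares_bound[of "cmod (w 1)" "cmod (w 2)"] sum_squares_bound[of "cmod (w 0)" "cmod (w 3)"]
    by simp
  finally show ?thesis .
qed

lemma cmod_flip_form_le: "cmod (flip_form w u) \<le> (sq_norm4 w + sq_norm4 u) / 2"
proof -
  define p where "p = (\<lambda>m. w m + u m)"
  define q where "q = (\<lambda>m. w m - u m)"
  have polar: "flip_form w u = (flip_form p p - flip_form q q) / 4"
    unfolding p_def q_def flip_form_def by (simp add: algebra_simps)
  have "cmod (flip_form w u) \<le> (cmod (flip_form p p) + cmod (flip_form q q)) / 4"
    unfolding polar by (simp add: norm_divide norm_triangle_ineq4 divide_right_mono)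
  also have "\<dots> \<le> (sq_norm4 p + sq_norm4 q) / 4"
    using cmod_flip_form_self_le[of p] cmod_flip_form_self_le[of q] by simp
  also have "sq_norm4 p + sq_norm4 q = 2 * sq_norm4 w + 2 * sq_norm4 u"
    unfolding sq_norm4_def p_def q_def sum_lessThan_4 cmod_power2
    by (simp add: algebra_simps power2_eq_square)
  finally show ?thesis by simp
qed

definition lincomb2 :: "(nat \<Rightarrow> nat \<Rightarrow> complex) \<Rightarrow> complex \<Rightarrow> complex \<Rightarrow> nat \<Rightarrow> complex" where
  "lincomb2 v x0 x1 = (\<lambda>m. x0 * v 0 m + x1 * v 1 m)"

lemma sq_norm4_lincomb2:
  "sq_norm4 (lincomb2 v x0 x1)
    = (cmod x0)\<^sup>2 * sq_norm4 (v 0) + (cmod x1)\<^sup>2 * sq_norm4 (v 1) + 2 * Re (x0 * cnj x1 * inner4 (v 0) (v 1))"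
proof -
  have "(cmod (x0 * p + x1 * q))\<^sup>2
      = (cmod x0)\<^sup>2 * (cmod p)\<^sup>2 + (cmod x1)\<^sup>2 * (cmod q)\<^sup>2 + 2 * Re (x0 * cnj x1 * (p * cnj q))" for p q
    unfolding cmod_power2 by (simp add: algebra_simps power2_eq_square)
  then show ?thesis
    unfolding sq_norm4_def lincomb2_def inner4_def sum_distrib_left Re_sum
    by (simp add: sum.distrib sum_distrib_left)
qed

text \<open>A Gram matrix \<open>[[a, C], [C, b]]\<close> of trace 1 and determinant at least 2/9 has
  largest eigenvalue at most 2/3.\<close>
lemma gram_form_le_two_thirds:
  fixes a b C X Y :: real
  assumes ab: "a + b = 1" and det: "8/9 \<le> 4 * (a * b - C\<^sup>2)"
    and nonneg: "0 \<le> C" "0 \<le> X" "0 \<le> Y"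
  shows "a * X\<^sup>2 + b * Y\<^sup>2 + 2 * C * X * Y \<le> 2/3 * (X\<^sup>2 + Y\<^sup>2)"
proof -
  define p where "p = 2/3 - a"
  define q where "q = 2/3 - b"
  have pq: "C\<^sup>2 \<le> p * q" and "p + q = 1/3"
    using ab det unfolding p_def q_def by (simp_all add: algebra_simps power2_eq_square)
  moreover have "0 \<le> p * q" using pq by (meson order_trans zero_le_power2)
  ultimately have p: "0 \<le> p" and q: "0 \<le> q" by (auto simp: zero_le_mult_iff)
  have "C \<le> sqrt p * sqrt q" using pq by (simp add: real_le_rsqrt flip: real_sqrt_mult)
  then have "C * (X * Y) \<le> (sqrt p * sqrt q) * (X * Y)"
    using nonneg by (intro mult_right_mono) auto
  then have "2 * C * X * Y \<le> 2 * (sqrt p * X) * (sqrt q * Y)" by (simp add: algebra_simps)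
  also have "\<dots> \<le> (sqrt p * X)\<^sup>2 + (sqrt q * Y)\<^sup>2" by (rule sum_squares_bound)
  also have "\<dots> = p * X\<^sup>2 + q * Y\<^sup>2" using p q by (simp add: power_mult_distrib)
  finally show ?thesis unfolding p_def q_def by (simp add: algebra_simps)
qed

lemma psd_form_2_det_nonneg:
  fixes a b :: real and w :: complex
  assumes psd: "\<And>x0 x1. 0 \<le> a * (cmod x0)\<^sup>2 + b * (cmod x1)\<^sup>2 - 2 * Re (x0 * cnj x1 * w)"
  shows "0 \<le> a" "0 \<le> b" "(cmod w)\<^sup>2 \<le> a * b"
proof -
  show a: "0 \<le> a" using psd[of 1 0] by simp
  show "0 \<le> b" using psd[of 0 1] by simp
  have Re_w: "Re (cnj w * cnj (of_real t) * w) = t * (cmod w)\<^sup>2" for t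
  proof -
    have "cnj w * cnj (of_real t) * w = of_real (t * (cmod w)\<^sup>2)"
      unfolding of_real_mult cmod_power2_eq_cnj_mult by (simp add: algebra_simps)
    then show ?thesis by (simp only: Re_complex_of_real)
  qed
  show "(cmod w)\<^sup>2 \<le> a * b"
  proof (cases "a = 0")
    case False
    have "0 \<le> a * (cmod (cnj w))\<^sup>2 + b * (cmod (of_real a))\<^sup>2 - 2 * Re (cnj w * cnj (of_real a) * w)"
      by (rule psd)
    then have "0 \<le> a * (a * b - (cmod w)\<^sup>2)"
      unfolding Re_w complex_mod_cnj norm_of_real power2_abs by (simp add: algebra_simps power2_eq_square)
    with False a show ?thesis by (simp add: zero_le_mult_iff)
  next
    case True
    have "w = 0"
    proof (rule ccontr)
      assume "w \<noteq> 0"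
      then have w: "(cmod w)\<^sup>2 > 0" by simp
      define t where "t = (b + 1) / (2 * (cmod w)\<^sup>2)"
      have "0 \<le> a * (cmod (cnj (of_real t * w)))\<^sup>2 + b * (cmod 1)\<^sup>2 - 2 * Re (cnj (of_real t * w) * cnj 1 * w)"
        by (rule psd)
      also have "cnj (of_real t * w) * cnj 1 * w = cnj w * cnj (of_real t) * w" by simp
      finally have "0 \<le> b - 2 * (t * (cmod w)\<^sup>2)" unfolding Re_w True by simp
      moreover have "2 * (t * (cmod w)\<^sup>2) = b + 1" unfolding t_def using w by simp
      ultimately show False by simp
    qed
    then show ?thesis using True by simp
  qed
qed

text \<open>In terms of the singular values \<open>s\<^sub>1 \<ge> s\<^sub>2\<close> of the matrix, the left-hand side is
  \<open>(s\<^sub>1 - s\<^sub>2)\<^sup>2 \<le> s\<^sub>1\<^sup>2\<close>.\<close>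
lemma frob_sub_det_le_of_norm_bound:
  fixes g00 g01 g10 g11 :: complex and L :: real
  assumes L: "0 < L"
    and bound: "\<And>x0 x1. (cmod (g00 * x0 + g01 * x1))\<^sup>2 + (cmod (g10 * x0 + g11 * x1))\<^sup>2
        \<le> L * ((cmod x0)\<^sup>2 + (cmod x1)\<^sup>2)"
  shows "(cmod g00)\<^sup>2 + (cmod g01)\<^sup>2 + (cmod g10)\<^sup>2 + (cmod g11)\<^sup>2 - 2 * cmod (g00 * g11 - g01 * g10) \<le> L"
proof -
  define p where "p = (cmod g00)\<^sup>2 + (cmod g10)\<^sup>2"
  define q where "q = (cmod g01)\<^sup>2 + (cmod g11)\<^sup>2"
  define w where "w = g00 * cnj g01 + g10 * cnj g11"
  define h where "h = cmod (g00 * g11 - g01 * g10)"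
  have norm_eq: "(cmod (g00 * x0 + g01 * x1))\<^sup>2 + (cmod (g10 * x0 + g11 * x1))\<^sup>2
      = p * (cmod x0)\<^sup>2 + q * (cmod x1)\<^sup>2 + 2 * Re (x0 * cnj x1 * w)" for x0 x1
    unfolding p_def q_def w_def cmod_power2 by (simp add: algebra_simps power2_eq_square)
  have "0 \<le> (L - p) * (cmod x0)\<^sup>2 + (L - q) * (cmod x1)\<^sup>2 - 2 * Re (x0 * cnj x1 * w)" for x0 x1
    using bound[of x0 x1] unfolding norm_eq by (simp only: left_diff_distrib distrib_left)
  note psd = psd_form_2_det_nonneg[OF this]
  have lagrange: "p * q - (cmod w)\<^sup>2 = h\<^sup>2"
    unfolding p_def q_def w_def h_def cmod_power2 by (simp add: algebra_simps power2_eq_square)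
  have "p + q - 2 * h \<le> L"
  proof (rule ccontr)
    assume gt: "\<not> ?thesis"
    then have "L * (p + q) > L * (L + 2 * h)" using L by (intro mult_strict_left_mono) auto
    then have "0 < h * (h - 2 * L)"
      using psd(3) lagrange by (simp add: algebra_simps power2_eq_square)
    then have "2 * L < h" using h_def by (simp add: zero_less_mult_iff)
    then show False using gt psd(1,2) L by linarith
  qed
  then show ?thesis unfolding p_def q_def h_def by simp
qed

lemma flip_form_lincomb2:
  "flip_form (lincomb2 v y0 y1) (lincomb2 v x0 x1)
    = y0 * (flip_form (v 0) (v 0) * x0 + flip_form (v 0) (v 1) * x1)
      + y1 * (flip_form (v 1) (v 0) * x0 + flip_form (v 1) (v 1) * x1)"
  unfolding lincomb2_def flip_form_def by (simp add: algebra_simps)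

context
  fixes v :: "nat \<Rightarrow> nat \<Rightarrow> complex"
  assumes trace: "sq_norm4 (v 0) + sq_norm4 (v 1) = 1"
    and det: "8/9 \<le> 4 * (sq_norm4 (v 0) * sq_norm4 (v 1) - (cmod (inner4 (v 0) (v 1)))\<^sup>2)"
begin

lemma sq_norm4_lincomb2_le: "sq_norm4 (lincomb2 v x0 x1) \<le> 2/3 * ((cmod x0)\<^sup>2 + (cmod x1)\<^sup>2)"
proof -
  define C where "C = cmod (inner4 (v 0) (v 1))"
  have "Re (x0 * cnj x1 * inner4 (v 0) (v 1)) \<le> cmod x0 * cmod x1 * C"
    using complex_Re_le_cmod[of "x0 * cnj x1 * inner4 (v 0) (v 1)"] unfolding C_def by (simp add: norm_mult)
  then have "sq_norm4 (lincomb2 v x0 x1)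
      \<le> (cmod x0)\<^sup>2 * sq_norm4 (v 0) + (cmod x1)\<^sup>2 * sq_norm4 (v 1) + 2 * (cmod x0 * cmod x1 * C)"
    unfolding sq_norm4_lincomb2 by linarith
  also have "\<dots> = sq_norm4 (v 0) * (cmod x0)\<^sup>2 + sq_norm4 (v 1) * (cmod x1)\<^sup>2 + 2 * C * cmod x0 * cmod x1"
    by (simp only: mult_ac)
  also have "\<dots> \<le> 2/3 * ((cmod x0)\<^sup>2 + (cmod x1)\<^sup>2)"
    using det unfolding C_def by (intro gram_form_le_two_thirds[OF trace]) simp_all
  finally show ?thesis .
qed

text \<open>Testing \<open>cmod_flip_form_le\<close> against \<open>y = (3/2) cnj (G x)\<close> turns the bound on
  \<open>\<rho>\<^sub>i\<^sub>j\<close> into a bound on \<open>|G x|\<^sup>2\<close>, where \<open>G\<^sub>r\<^sub>s = flip_form (v r) (v s)\<close>.\<close>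
lemma flip_gram_norm_bound:
  "(cmod (flip_form (v 0) (v 0) * x0 + flip_form (v 0) (v 1) * x1))\<^sup>2
     + (cmod (flip_form (v 1) (v 0) * x0 + flip_form (v 1) (v 1) * x1))\<^sup>2
   \<le> 4/9 * ((cmod x0)\<^sup>2 + (cmod x1)\<^sup>2)"
proof -
  define u0 where "u0 = flip_form (v 0) (v 0) * x0 + flip_form (v 0) (v 1) * x1"
  define u1 where "u1 = flip_form (v 1) (v 0) * x0 + flip_form (v 1) (v 1) * x1"
  define N where "N = (cmod u0)\<^sup>2 + (cmod u1)\<^sup>2"
  define y0 where "y0 = 3/2 * cnj u0"
  define y1 where "y1 = 3/2 * cnj u1"
  have "flip_form (lincomb2 v y0 y1) (lincomb2 v x0 x1) = y0 * u0 + y1 * u1"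
    unfolding flip_form_lincomb2 u0_def u1_def ..
  also have "\<dots> = of_real (3/2 * N)"
    unfolding y0_def y1_def N_def of_real_mult of_real_add cmod_power2_eq_cnj_mult by (simp add: algebra_simps)
  finally have eq: "flip_form (lincomb2 v y0 y1) (lincomb2 v x0 x1) = of_real (3/2 * N)" .
  have "0 \<le> N" unfolding N_def by simp
  then have "3/2 * N = cmod (flip_form (lincomb2 v y0 y1) (lincomb2 v x0 x1))"
    unfolding eq by simp
  also have "\<dots> \<le> (sq_norm4 (lincomb2 v y0 y1) + sq_norm4 (lincomb2 v x0 x1)) / 2"
    by (rule cmod_flip_form_le)
  also have "\<dots> \<le> (2/3 * ((cmod y0)\<^sup>2 + (cmod y1)\<^sup>2) + 2/3 * ((cmod x0)\<^sup>2 + (cmod x1)\<^sup>2)) / 2"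
    using sq_norm4_lincomb2_le by (intro divide_right_mono add_mono) auto
  also have "(cmod y0)\<^sup>2 + (cmod y1)\<^sup>2 = 9/4 * N"
    unfolding y0_def y1_def N_def by (simp add: norm_mult power2_eq_square field_simps)
  finally have "N \<le> 4/9 * ((cmod x0)\<^sup>2 + (cmod x1)\<^sup>2)" by (simp add: field_simps)
  then show ?thesis unfolding N_def u0_def u1_def .
qed

lemma flip_frob_sub_flip_det_le: "flip_frob v - 2 * cmod (flip_det v) \<le> 4/9"
  using frob_sub_det_le_of_norm_bound[OF _ flip_gram_norm_bound]
  unfolding flip_frob_def flip_det_def sum_lessThan_2 by (simp add: add.assoc)

end

theorem corollary3:
  fixes psi :: "complex vec" and i j k :: nat
  assumes "pure_three_qubit psi"
    and "{i, j, k} = {0, 1, 2}"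
    and "F3_steerable (reduced psi i j)"
  shows "((concurrence (reduced psi i k))\<^sup>2 + (concurrence (reduced psi j k))\<^sup>2) / 2 < 4 / 9"
proof -
  define T where "T = (\<lambda>x y z. psi $ bidx i j x y z)"
  define v where "v = cond_ij T"
  define x where "x = 4 * (sq_norm4 (v 0) * sq_norm4 (v 1) - (cmod (inner4 (v 0) (v 1)))\<^sup>2)"
  define h where "h = cmod (flip_det v)"
  note reductions = reduced_eq_rank2_rho[OF assms(2), where psi = psi, folded T_def]
  have total: "sq_norm4 (v 0) + sq_norm4 (v 1) = 1"
    unfolding v_def T_def by (rule sq_norm4_cond_ij_total[OF assms(2,1)])
  have "Sval (reduced psi i j) = 1 + 2 * flip_frob v - x"
    unfolding reductions Sval_rank2_rho v_def[symmetric] total x_def by simp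
  then have steer: "x < 2 * flip_frob v" using assms(3) unfolding F3_steerable_def by simp
  have conc: "(concurrence (reduced psi i k))\<^sup>2 + (concurrence (reduced psi j k))\<^sup>2 = x - 4 * h"
    unfolding reductions concurrence_rank2_rho flip_det_cond_ik flip_det_cond_jk
    using flip_frob_cond_ik_add_cond_jk[of T] unfolding x_def h_def v_def by simp
  show ?thesis
  proof (rule ccontr)
    assume "\<not> ?thesis"
    then have bound: "8/9 \<le> x - 4 * h" unfolding conc by simp
    moreover have "0 \<le> h" unfolding h_def by simp
    ultimately have "8/9 \<le> x" by linarith
    then have "flip_frob v - 2 * h \<le> 4/9"
      unfolding h_def x_def by (rule flip_frob_sub_flip_det_le[OF total])
    with steer bound show False by linarith
  qed
qed

end
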